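(* Let $(u,z,\mathcal R)$ be a (sufficiently regular) solution of the linearized system \[ \partial_tu=\bar\kappa\Delta_yu-\Big(1-\frac1\gamma\Big)\dot z,\ \ u(1,t)=0,\qquad z=\frac1{R_gT_\infty}\Big(-\frac{2\sigma}{R_*^2}\mathcal R+\frac{4\mu_l}{R_*}\dot{\mathcal R}+\rho_lR_*\ddot{\mathcal R}\Big),\qquad \int_{B_1}u\,dx=-\frac{4\pi}3z-4\pi\frac{\rho_*}{R_*}\mathcal R. \] Then, with \[ \mathcal E^L_{\rm total}=-4\pi\sigma\mathcal R^2-4\pi R_gT_\infty R_*^2\mathcal Rz-\frac{2\pi R_gT_\infty R_*^3}{3\rho_*}z^2+\frac{c_v\gamma T_\infty R_*^3}{2\rho_*}\int_{B_1}u^2dx+2\pi\rho_lR_*^3\dot{\mathcal R}^2, \] one has \[ \frac{d}{dt}\mathcal E^L_{\rm total}=-\frac{\kappa T_\infty}{\rho_*^2}R_*\int_{B_1}|\nabla_yu|^2dx-16\pi\mu_lR_*\dot{\mathcal R}^2. \]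
   Context: Parameters: $\kappa>0$, $\gamma>1$, $c_v>0$, $R_g>0$ with $c_p=\gamma c_v=c_v+R_g$; $T_\infty>0$, $p_{\infty,*}>0$, $\sigma>0$, $\mu_l\ge0$, $\rho_l>0$; $\rho_*,R_*>0$ with $R_gT_\infty\rho_*=p_{\infty,*}+2\sigma/R_*$; $\bar\kappa=\kappa/(c_p\rho_*R_*^2)$. $B_1$ is the unit ball of $\mathbb R^3$, $u(y,t)$ is identified with the radial function $u(|x|,t)$, $\Delta_y$ the radial Laplacian $y^{-2}\partial_y(y^2\partial_y)$ and $\nabla_y$ the gradient in $x$. *)

theory Defs
  imports "HOL-Analysis.Analysis"
begin

definition ball_int :: "(real \<Rightarrow> real) \<Rightarrow> real" where
  "ball_int f = integral (ball (0::real^3) 1) (\<lambda>x. f (norm x))"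

end

theory Submission
  imports Defs
begin

text \<open>
  For the heat equation \<open>u\<^sub>t = c \<Delta>u - g\<close>, multiplying by \<open>u\<close> and integrating by parts against
  the Dirichlet condition \<open>u(1) = 0\<close> gives \<open>d/dt \<integral> u\<^sup>2 = - 2c \<integral> |\<nabla>u|\<^sup>2 - 2g \<integral> u\<close>.
  The mass constraint expresses \<open>\<integral> u\<close> through \<open>z\<close> and \<open>R\<close>, and then the cross terms in
  \<open>z'\<close> cancel against the derivatives of the quadratic terms in \<open>R\<close> and \<open>z\<close>; the remaining
  term \<open>R' z\<close> is eliminated by the equation for \<open>z\<close>, leaving only the two dissipations.
  Radial integrals over the ball are computed as \<open>4\<pi> \<integral>\<^sub>0\<^sup>1 r\<^sup>2 f(r) dr\<close>, because the
  image of Lebesgue measure on the ball under the norm has density \<open>4\<pi>r\<^sup>2\<close> on \<open>[0,1]\<close>.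
\<close>

lemma emeasure_unit_ball_3_norm_greaterThan:
  "emeasure lborel (ball (0::real^3) 1 \<inter> {x. a < norm x})
     = ennreal (4/3 * pi * (1 - (max a 0)^3)) * indicator {..<1} a"
proof -
  consider "a < 0" | "0 \<le> a" "a < 1" | "1 \<le> a" by linarith
  then show ?thesis
  proof cases
    case 1
    then have "ball (0::real^3) 1 \<inter> {x. a < norm x} = ball 0 1"
      by (auto intro: less_le_trans[OF _ norm_ge_zero])
    with 1 show ?thesis
      by (simp add: emeasure_ball unit_ball_vol_3)
  next
    case 2
    then have "ball (0::real^3) 1 \<inter> {x. a < norm x} = ball 0 1 - cball 0 a"
      by auto
    moreover have "emeasure lborel (ball (0::real^3) 1 - cball 0 a)
        = emeasure lborel (ball (0::real^3) 1) - emeasure lborel (cball (0::real^3) a)"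
      using 2 by (intro emeasure_Diff) (auto simp: emeasure_cball unit_ball_vol_3)
    ultimately show ?thesis
      using 2 by (simp add: emeasure_ball emeasure_cball unit_ball_vol_3 ennreal_minus
          right_diff_distrib)
  next
    case 3
    then have "ball (0::real^3) 1 \<inter> {x. a < norm x} = {}"
      by auto
    with 3 show ?thesis
      by simp
  qed
qed

lemma emeasure_radial_density_3_greaterThan:
  "emeasure (density lborel (\<lambda>r. ennreal (4 * pi * r\<^sup>2) * indicator {0..1} r)) {a<..}
     = ennreal (4/3 * pi * (1 - (max a 0)^3)) * indicator {..<1} a"
proof -
  have "emeasure (density lborel (\<lambda>r. ennreal (4 * pi * r\<^sup>2) * indicator {0..1} r)) {a<..}
      = (\<integral>\<^sup>+r. ennreal (4 * pi * r\<^sup>2) * indicator {0..1} r * indicator {a<..} r \<partial>lborel)"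
    by (rule emeasure_density) auto
  also have "\<dots> = (\<integral>\<^sup>+r. ennreal (4 * pi * r\<^sup>2) * indicator {max a 0..1} r * indicator {..<1} a \<partial>lborel)"
    using AE_lborel_singleton[of a]
    by (intro nn_integral_cong_AE, eventually_elim) (auto split: split_indicator)
  also have "\<dots> = (\<integral>\<^sup>+r. ennreal (4 * pi * r\<^sup>2) * indicator {max a 0..1} r \<partial>lborel) * indicator {..<1} a"
    by (simp add: nn_integral_multc)
  also have "\<dots> = ennreal (4/3 * pi * (1 - (max a 0)^3)) * indicator {..<1} a"
  proof (cases "a < 1")
    case True
    have "(\<integral>\<^sup>+r. ennreal (4 * pi * r\<^sup>2) * indicator {max a 0..1} r \<partial>lborel)
        = ennreal (4/3 * pi * 1^3 - 4/3 * pi * (max a 0)^3)"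
      using True
      by (intro nn_integral_FTC_Icc) (auto intro!: derivative_eq_intros simp: power2_eq_square)
    then show ?thesis
      by (simp add: right_diff_distrib)
  qed simp
  finally show ?thesis .
qed

lemma distr_norm_unit_ball_3:
  "distr (density lborel (indicator (ball (0::real^3) 1))) borel norm
     = density lborel (\<lambda>r. ennreal (4 * pi * r\<^sup>2) * indicator {0..1} r)" (is "?N = ?N'")
proof (rule measure_eqI_lessThan)
  have eq: "emeasure ?N {a<..} = emeasure ?N' {a<..}" for a
  proof -
    have "emeasure ?N {a<..} = emeasure lborel (ball (0::real^3) 1 \<inter> {x. a < norm x})"
      by (subst emeasure_distr) (auto simp: emeasure_restricted vimage_def Int_commute)
    also have "\<dots> = emeasure ?N' {a<..}"
      by (simp only: emeasure_unit_ball_3_norm_greaterThan emeasure_radial_density_3_greaterThan)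
    finally show ?thesis .
  qed
  show "emeasure ?N {a<..} = emeasure ?N' {a<..}" for a
    by (rule eq)
  show "emeasure ?N {a<..} < \<infinity>" for a
    by (simp add: eq emeasure_radial_density_3_greaterThan ennreal_mult_less_top
        split: split_indicator)
qed simp_all

lemma integral_unit_ball_3_radial:
  fixes f :: "real \<Rightarrow> real"
  assumes f: "continuous_on {0..1} f"
  shows "integral (ball (0::real^3) 1) (\<lambda>x. f (norm x)) = 4 * pi * integral {0..1} (\<lambda>r. r\<^sup>2 * f r)"
proof -
  define g where "g r = f (max 0 (min 1 r))" for r
  have g: "continuous_on UNIV g"
    unfolding g_def by (rule continuous_on_compose2[OF f]) (auto intro!: continuous_intros)
  then have g_measurable[measurable]: "g \<in> borel_measurable borel"
    by (rule borel_measurable_continuous_onI)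
  let ?B = "ball (0::real^3) 1"
  have "set_integrable lborel (cball (0::real^3) 1) (\<lambda>x. g (norm x))"
    unfolding set_integrable_def
    by (rule borel_integrable_compact) (auto intro!: continuous_on_compose2[OF g] continuous_intros)
  then have int_B: "set_integrable lborel ?B (\<lambda>x. g (norm x))"
    by (rule set_integrable_subset) auto
  have int_01: "set_integrable lborel {0..1::real} (\<lambda>r. r\<^sup>2 * g r)"
    unfolding set_integrable_def
    by (rule borel_integrable_compact) (auto intro!: continuous_on_compose2[OF g] continuous_intros)
  have "integral ?B (\<lambda>x. f (norm x)) = integral ?B (\<lambda>x. g (norm x))"
    by (rule integral_cong) (auto simp: g_def)
  also have "\<dots> = (\<integral>x. indicator ?B x *\<^sub>R g (norm x) \<partial>lborel)"
    using set_borel_integral_eq_integral(2)[OF int_B] by (simp add: set_lebesgue_integral_def)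
  also have "\<dots> = (\<integral>x. g (norm x) \<partial>density lborel (\<lambda>x. ennreal (indicator ?B x)))"
    by (rule integral_density[symmetric]) (auto intro!: borel_measurable_indicator borel_open)
  also have "density lborel (\<lambda>x. ennreal (indicator ?B x)) = density lborel (indicator ?B)"
    by (simp add: ennreal_indicator)
  also have "(\<integral>x. g (norm x) \<partial>density lborel (indicator ?B))
      = (\<integral>r. g r \<partial>distr (density lborel (indicator ?B)) borel norm)"
    by (rule integral_distr[symmetric]) auto
  also have "distr (density lborel (indicator ?B)) borel norm
      = density lborel (\<lambda>r. ennreal (4 * pi * r\<^sup>2 * indicator {0..1} r))"
    by (simp add: distr_norm_unit_ball_3 ennreal_mult' ennreal_indicator)
  also have "(\<integral>r. g r \<partial>density lborel (\<lambda>r. ennreal (4 * pi * r\<^sup>2 * indicator {0..1} r)))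
      = (\<integral>r. (4 * pi * r\<^sup>2 * indicator {0..1} r) *\<^sub>R g r \<partial>lborel)"
    by (rule integral_density) auto
  also have "\<dots> = 4 * pi * (\<integral>r. indicator {0..1} r *\<^sub>R (r\<^sup>2 * g r) \<partial>lborel)"
    by (subst integral_mult_right_zero[symmetric]) (simp add: mult_ac)
  also have "(\<integral>r. indicator {0..1} r *\<^sub>R (r\<^sup>2 * g r) \<partial>lborel) = integral {0..1} (\<lambda>r. r\<^sup>2 * g r)"
    using set_borel_integral_eq_integral(2)[OF int_01] by (simp add: set_lebesgue_integral_def)
  also have "integral {0..1} (\<lambda>r. r\<^sup>2 * g r) = integral {0..1} (\<lambda>r. r\<^sup>2 * f r)"
    by (rule integral_cong) (auto simp: g_def)
  finally show ?thesis .
qed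

lemma leibniz_rule_field_derivative_open:
  fixes f fx :: "'a::{real_normed_field, banach} \<Rightarrow> 'b::euclidean_space \<Rightarrow> 'a"
  assumes "open U" "x0 \<in> U"
    and fx: "\<And>x t. x \<in> U \<Longrightarrow> t \<in> cbox a b \<Longrightarrow> ((\<lambda>x. f x t) has_field_derivative fx x t) (at x)"
    and integrable: "\<And>x. x \<in> U \<Longrightarrow> f x integrable_on cbox a b"
    and cont: "continuous_on (U \<times> cbox a b) (\<lambda>(x, t). fx x t)"
  shows "((\<lambda>x. integral (cbox a b) (f x)) has_field_derivative integral (cbox a b) (fx x0)) (at x0)"
proof -
  obtain \<delta> where "\<delta> > 0" and ball: "ball x0 \<delta> \<subseteq> U"
    using assms(1,2) open_contains_ball by blast
  have "((\<lambda>x. integral (cbox a b) (f x)) has_field_derivative integral (cbox a b) (fx x0))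
      (at x0 within ball x0 \<delta>)"
  proof (rule leibniz_rule_field_derivative)
    show "continuous_on (ball x0 \<delta> \<times> cbox a b) (\<lambda>(x, t). fx x t)"
      using ball by (intro continuous_on_subset[OF cont] Sigma_mono) auto
  next
    fix x t assume "x \<in> ball x0 \<delta>" "t \<in> cbox a b"
    then show "((\<lambda>x. f x t) has_field_derivative fx x t) (at x within ball x0 \<delta>)"
      using ball by (blast intro: has_field_derivative_at_within fx)
  next
    fix x assume "x \<in> ball x0 \<delta>"
    then show "f x integrable_on cbox a b"
      using ball by (blast intro: integrable)
  qed (use \<open>\<delta> > 0\<close> in auto)
  then show ?thesis
    using \<open>\<delta> > 0\<close> at_within_open[of x0 "ball x0 \<delta>"] by simp
qed

lemma integral_radial_laplacian_by_parts:
  fixes v v' v'' :: "real \<Rightarrow> real"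
  assumes v': "\<And>r. r \<in> {0..1} \<Longrightarrow> (v has_real_derivative v' r) (at r within {0..1})"
    and v'': "\<And>r. r \<in> {0..1} \<Longrightarrow> (v' has_real_derivative v'' r) (at r within {0..1})"
    and "v 1 = 0"
  shows "((\<lambda>r. v r * (r\<^sup>2 * v'' r + 2 * r * v' r)) has_integral
           - integral {0..1} (\<lambda>r. r\<^sup>2 * (v' r)\<^sup>2)) {0..1}"
proof -
  have "((\<lambda>r. v r * (r\<^sup>2 * v'' r + 2 * r * v' r) + r\<^sup>2 * (v' r)\<^sup>2) has_integral
      1\<^sup>2 * v 1 * v' 1 - 0\<^sup>2 * v 0 * v' 0) {0..1}"
  proof (rule fundamental_theorem_of_calculus)
    fix r :: real assume "r \<in> {0..1}"
    have "((\<lambda>r. r\<^sup>2 * v r * v' r) has_real_derivative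
        v r * (r\<^sup>2 * v'' r + 2 * r * v' r) + r\<^sup>2 * (v' r)\<^sup>2) (at r within {0..1})"
      using \<open>r \<in> {0..1}\<close>
      by (auto intro!: derivative_eq_intros v' v'' simp: power2_eq_square algebra_simps)
    then show "((\<lambda>r. r\<^sup>2 * v r * v' r) has_vector_derivative
        v r * (r\<^sup>2 * v'' r + 2 * r * v' r) + r\<^sup>2 * (v' r)\<^sup>2) (at r within {0..1})"
      by (simp add: has_real_derivative_iff_has_vector_derivative)
  qed simp
  moreover have "continuous_on {0..1} v'"
    using v'' by (rule DERIV_continuous_on)
  then have "((\<lambda>r. r\<^sup>2 * (v' r)\<^sup>2) has_integral integral {0..1} (\<lambda>r. r\<^sup>2 * (v' r)\<^sup>2)) {0..1}"
    by (intro integrable_integral integrable_continuous_interval continuous_intros)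
  ultimately show ?thesis
    using \<open>v 1 = 0\<close> by (force dest: has_integral_diff)
qed

lemma has_real_derivative_ball_int_square:
  fixes u ut :: "real \<Rightarrow> real \<Rightarrow> real"
  assumes "open I" "t \<in> I"
    and u_t: "\<And>s y. s \<in> I \<Longrightarrow> y \<in> {0..1} \<Longrightarrow> ((\<lambda>\<tau>. u y \<tau>) has_real_derivative ut y s) (at s)"
    and cont_u: "continuous_on ({0..1} \<times> I) (\<lambda>(y, s). u y s)"
    and cont_ut: "continuous_on ({0..1} \<times> I) (\<lambda>(y, s). ut y s)"
  shows "((\<lambda>s. ball_int (\<lambda>y. (u y s)\<^sup>2)) has_real_derivative 2 * ball_int (\<lambda>y. u y t * ut y t))
           (at t)"
proof -
  have slice: "continuous_on {0..1} (\<lambda>y. w y s)"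
    if "continuous_on ({0..1} \<times> I) (\<lambda>(y, s). w y s)" "s \<in> I" for w :: "real \<Rightarrow> real \<Rightarrow> real" and s
    by (rule continuous_on_compose_Pair[OF that(1) continuous_on_id continuous_on_const])
      (use that(2) in auto)
  have "((\<lambda>s. integral {0..1} (\<lambda>r. r\<^sup>2 * (u r s)\<^sup>2)) has_real_derivative
      integral {0..1} (\<lambda>r. 2 * (r\<^sup>2 * (u r t * ut r t)))) (at t)"
    unfolding cbox_interval[symmetric]
  proof (rule leibniz_rule_field_derivative_open[OF \<open>open I\<close> \<open>t \<in> I\<close>])
    fix s r assume "s \<in> I" "r \<in> cbox 0 (1::real)"
    then show "((\<lambda>s. r\<^sup>2 * (u r s)\<^sup>2) has_real_derivative 2 * (r\<^sup>2 * (u r s * ut r s))) (at s)"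
      by (auto intro!: derivative_eq_intros u_t)
  next
    fix s assume "s \<in> I"
    then show "(\<lambda>r. r\<^sup>2 * (u r s)\<^sup>2) integrable_on cbox 0 1"
      by (auto intro!: integrable_continuous_interval continuous_intros slice[OF cont_u])
  next
    show "continuous_on (I \<times> cbox 0 1) (\<lambda>(s, r). 2 * (r\<^sup>2 * (u r s * ut r s)))"
      using continuous_on_swap_args[OF cont_u] continuous_on_swap_args[OF cont_ut]
      by (auto intro!: continuous_intros simp: case_prod_unfold)
  qed
  from DERIV_cmult[OF this, of "4 * pi"]
  have "((\<lambda>s. 4 * pi * integral {0..1} (\<lambda>r. r\<^sup>2 * (u r s)\<^sup>2)) has_real_derivative
      2 * (4 * pi * integral {0..1} (\<lambda>r. r\<^sup>2 * (u r t * ut r t)))) (at t)"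
    by (simp add: mult.left_commute)
  moreover have "ball_int (\<lambda>y. (u y s)\<^sup>2) = 4 * pi * integral {0..1} (\<lambda>r. r\<^sup>2 * (u r s)\<^sup>2)"
    if "s \<in> I" for s
    unfolding ball_int_def
    by (intro integral_unit_ball_3_radial continuous_intros slice[OF cont_u] that)
  moreover have "ball_int (\<lambda>y. u y t * ut y t) = 4 * pi * integral {0..1} (\<lambda>r. r\<^sup>2 * (u r t * ut r t))"
    unfolding ball_int_def
    by (intro integral_unit_ball_3_radial continuous_intros slice cont_u cont_ut \<open>t \<in> I\<close>)
  ultimately show ?thesis
    using \<open>open I\<close> \<open>t \<in> I\<close> by (auto intro: has_field_derivative_transform_within_open)
qed

lemma ball_int_mul_radial_heat_equation:
  fixes v v' v'' w :: "real \<Rightarrow> real" and c g :: real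
  assumes v': "\<And>r. r \<in> {0..1} \<Longrightarrow> (v has_real_derivative v' r) (at r within {0..1})"
    and v'': "\<And>r. r \<in> {0..1} \<Longrightarrow> (v' has_real_derivative v'' r) (at r within {0..1})"
    and "v 1 = 0"
    and cont_w: "continuous_on {0..1} w"
    and heat: "\<And>r. r \<in> {0<..1} \<Longrightarrow> w r = c * (v'' r + 2 / r * v' r) - g"
  shows "ball_int (\<lambda>y. v y * w y) = - c * ball_int (\<lambda>y. (v' y)\<^sup>2) - g * ball_int v"
proof -
  have cont_v: "continuous_on {0..1} v"
    using v' by (rule DERIV_continuous_on)
  have cont_v': "continuous_on {0..1} v'"
    using v'' by (rule DERIV_continuous_on)
  have pointwise: "r\<^sup>2 * (v r * w r) = c * (v r * (r\<^sup>2 * v'' r + 2 * r * v' r)) - g * (r\<^sup>2 * v r)"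
    if "r \<in> {0..1}" for r
  proof (cases "r = 0")
    case False
    with that have "r\<^sup>2 * (v r * w r) = v r * (c * (r\<^sup>2 * v'' r + r\<^sup>2 * (2 / r) * v' r) - g * r\<^sup>2)"
      by (simp add: heat algebra_simps)
    also have "r\<^sup>2 * (2 / r) = 2 * r"
      using False by (simp add: power2_eq_square)
    finally show ?thesis
      by (simp add: algebra_simps)
  qed simp
  have "((\<lambda>r. c * (v r * (r\<^sup>2 * v'' r + 2 * r * v' r)) - g * (r\<^sup>2 * v r)) has_integral
      c * - integral {0..1} (\<lambda>r. r\<^sup>2 * (v' r)\<^sup>2) - g * integral {0..1} (\<lambda>r. r\<^sup>2 * v r)) {0..1}"
    by (intro has_integral_diff has_integral_mult_right integral_radial_laplacian_by_parts v' v''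
        \<open>v 1 = 0\<close> integrable_integral integrable_continuous_interval cont_v continuous_intros)
  then have "((\<lambda>r. r\<^sup>2 * (v r * w r)) has_integral
      c * - integral {0..1} (\<lambda>r. r\<^sup>2 * (v' r)\<^sup>2) - g * integral {0..1} (\<lambda>r. r\<^sup>2 * v r)) {0..1}"
    by (rule has_integral_eq[rotated]) (simp add: pointwise)
  then have integral_vw: "integral {0..1} (\<lambda>r. r\<^sup>2 * (v r * w r))
      = - c * integral {0..1} (\<lambda>r. r\<^sup>2 * (v' r)\<^sup>2) - g * integral {0..1} (\<lambda>r. r\<^sup>2 * v r)"
    by (simp add: integral_unique)
  have radial: "ball_int (\<lambda>y. v y * w y) = 4 * pi * integral {0..1} (\<lambda>r. r\<^sup>2 * (v r * w r))"
    "ball_int (\<lambda>y. (v' y)\<^sup>2) = 4 * pi * integral {0..1} (\<lambda>r. r\<^sup>2 * (v' r)\<^sup>2)"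
    "ball_int v = 4 * pi * integral {0..1} (\<lambda>r. r\<^sup>2 * v r)"
    unfolding ball_int_def
    by (intro integral_unit_ball_3_radial continuous_intros cont_v cont_v' cont_w)+
  show ?thesis
    unfolding radial integral_vw by (simp add: algebra_simps)
qed

lemma linearized_bubble_energy_rate_identity:
  fixes \<kappa> \<gamma> cv Rg cp Tinf \<sigma> \<mu>l \<rho>l \<rho>s Rs R Rd Rdd z zd B Bu :: real
  assumes "\<gamma> > 1" "cv > 0" "Rg > 0" "cp = \<gamma> * cv" "cp = cv + Rg" "Tinf > 0" "\<rho>s > 0" "Rs > 0"
    and mass: "Bu = - 4 * pi / 3 * z - 4 * pi * \<rho>s / Rs * R"
    and zeq: "z = 1 / (Rg * Tinf) * (- 2 * \<sigma> / Rs\<^sup>2 * R + 4 * \<mu>l / Rs * Rd + \<rho>l * Rs * Rdd)"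
  shows "- 4 * pi * \<sigma> * (2 * R * Rd) - 4 * pi * Rg * Tinf * Rs\<^sup>2 * (Rd * z + R * zd)
      - 2 * pi * Rg * Tinf * Rs ^ 3 / (3 * \<rho>s) * (2 * z * zd)
      + cv * \<gamma> * Tinf * Rs ^ 3 / (2 * \<rho>s)
        * (2 * (- (\<kappa> / (cp * \<rho>s * Rs\<^sup>2)) * B - (1 - 1 / \<gamma>) * zd * Bu))
      + 2 * pi * \<rho>l * Rs ^ 3 * (2 * Rd * Rdd)
    = - \<kappa> * Tinf / \<rho>s\<^sup>2 * Rs * B - 16 * pi * \<mu>l * Rs * Rd\<^sup>2"
proof -
  define C where "C = cv * \<gamma> * Tinf * Rs ^ 3 / (2 * \<rho>s)"
  define c where "c = \<kappa> / (cp * \<rho>s * Rs\<^sup>2)"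
  define k where "k = 1 - 1 / \<gamma>"
  have Cc: "C * c = \<kappa> * Tinf * Rs / (2 * \<rho>s\<^sup>2)"
    unfolding C_def c_def using assms(1-8) by (simp add: field_simps power2_eq_square power3_eq_cube)
  have Rg: "Rg = \<gamma> * cv - cv"
    using assms(4,5) by simp
  have Ck: "C * k = Rg * Tinf * Rs ^ 3 / (2 * \<rho>s)"
    unfolding C_def k_def Rg using assms(1,7) by (simp add: field_simps)
  have "C * (2 * (- c * B - k * zd * Bu)) = - 2 * (C * c) * B - 2 * (C * k) * zd * Bu"
    by (simp add: algebra_simps)
  moreover have "- 4 * pi * \<sigma> * (2 * R * Rd) - 4 * pi * Rg * Tinf * Rs\<^sup>2 * (Rd * z + R * zd)
      - 2 * pi * Rg * Tinf * Rs ^ 3 / (3 * \<rho>s) * (2 * z * zd)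
      + (- 2 * (C * c) * B - 2 * (C * k) * zd * Bu) + 2 * pi * \<rho>l * Rs ^ 3 * (2 * Rd * Rdd)
    = - \<kappa> * Tinf / \<rho>s\<^sup>2 * Rs * B - 16 * pi * \<mu>l * Rs * Rd\<^sup>2"
    unfolding Cc Ck mass zeq using assms(1-8) by (simp add: field_simps power2_eq_square power3_eq_cube)
  ultimately show ?thesis
    by (simp add: C_def c_def k_def)
qed

theorem proposition3p4:
  fixes \<kappa> \<gamma> cv Rg cp Tinf pinfs \<sigma> \<mu>l \<rho>l \<rho>s Rs :: real
    and u uy uyy ut :: "real \<Rightarrow> real \<Rightarrow> real"
    and R Rd Rdd z zd :: "real \<Rightarrow> real"
    and I :: "real set" and t :: real
  assumes par: "\<kappa> > 0" "\<gamma> > 1" "cv > 0" "Rg > 0" "cp = \<gamma> * cv" "cp = cv + Rg"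
      "Tinf > 0" "pinfs > 0" "\<sigma> > 0" "\<mu>l \<ge> 0" "\<rho>l > 0" "\<rho>s > 0" "Rs > 0"
      "Rg * Tinf * \<rho>s = pinfs + 2 * \<sigma> / Rs"
    and I: "open I" "t \<in> I"
    \<comment> \<open>regularity of u on [0,1] x I\<close>
    and u_y: "\<And>s y. s \<in> I \<Longrightarrow> y \<in> {0..1} \<Longrightarrow>
        ((\<lambda>r. u r s) has_real_derivative uy y s) (at y within {0..1})"
    and u_yy: "\<And>s y. s \<in> I \<Longrightarrow> y \<in> {0..1} \<Longrightarrow>
        ((\<lambda>r. uy r s) has_real_derivative uyy y s) (at y within {0..1})"
    and u_t: "\<And>s y. s \<in> I \<Longrightarrow> y \<in> {0..1} \<Longrightarrow>
        ((\<lambda>\<tau>. u y \<tau>) has_real_derivative ut y s) (at s)"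
    and cont: "continuous_on ({0..1} \<times> I) (\<lambda>(y,s). u y s)"
      "continuous_on ({0..1} \<times> I) (\<lambda>(y,s). uy y s)"
      "continuous_on ({0..1} \<times> I) (\<lambda>(y,s). uyy y s)"
      "continuous_on ({0..1} \<times> I) (\<lambda>(y,s). ut y s)"
    \<comment> \<open>regularity of R and z\<close>
    and R_t: "\<And>s. s \<in> I \<Longrightarrow> (R has_real_derivative Rd s) (at s)"
    and Rd_t: "\<And>s. s \<in> I \<Longrightarrow> (Rd has_real_derivative Rdd s) (at s)"
    and z_t: "\<And>s. s \<in> I \<Longrightarrow> (z has_real_derivative zd s) (at s)"
    \<comment> \<open>the linearized system\<close>
    and pde: "\<And>s y. s \<in> I \<Longrightarrow> y \<in> {0<..1} \<Longrightarrow>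
        ut y s = \<kappa> / (cp * \<rho>s * Rs\<^sup>2) * (uyy y s + 2 / y * uy y s) - (1 - 1 / \<gamma>) * zd s"
    and bc: "\<And>s. s \<in> I \<Longrightarrow> u 1 s = 0"
    and zeq: "\<And>s. s \<in> I \<Longrightarrow>
        z s = 1 / (Rg * Tinf) * (- 2 * \<sigma> / Rs\<^sup>2 * R s + 4 * \<mu>l / Rs * Rd s + \<rho>l * Rs * Rdd s)"
    and mass: "\<And>s. s \<in> I \<Longrightarrow>
        ball_int (\<lambda>y. u y s) = - 4 * pi / 3 * z s - 4 * pi * \<rho>s / Rs * R s"
  shows "((\<lambda>s. - 4 * pi * \<sigma> * (R s)\<^sup>2 - 4 * pi * Rg * Tinf * Rs\<^sup>2 * R s * z s
              - 2 * pi * Rg * Tinf * Rs ^ 3 / (3 * \<rho>s) * (z s)\<^sup>2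
              + cv * \<gamma> * Tinf * Rs ^ 3 / (2 * \<rho>s) * ball_int (\<lambda>y. (u y s)\<^sup>2)
              + 2 * pi * \<rho>l * Rs ^ 3 * (Rd s)\<^sup>2)
          has_real_derivative
           (- \<kappa> * Tinf / \<rho>s\<^sup>2 * Rs * ball_int (\<lambda>y. (uy y t)\<^sup>2)
            - 16 * pi * \<mu>l * Rs * (Rd t)\<^sup>2)) (at t)"
proof -
  have t: "t \<in> I"
    by (rule I(2))
  have "continuous_on {0..1} (\<lambda>y. ut y t)"
    by (rule continuous_on_compose_Pair[OF cont(4) continuous_on_id continuous_on_const]) (use t in auto)
  with u_y[OF t] u_yy[OF t] bc[OF t]
  have heat: "ball_int (\<lambda>y. u y t * ut y t) = - (\<kappa> / (cp * \<rho>s * Rs\<^sup>2)) * ball_int (\<lambda>y. (uy y t)\<^sup>2)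
      - (1 - 1 / \<gamma>) * zd t * ball_int (\<lambda>y. u y t)"
    using pde[OF t] by (rule ball_int_mul_radial_heat_equation)
  \<comment> \<open>kept abstract so that the chain rule below does not unfold the heat-energy term\<close>
  define E' where "E' = 2 * ball_int (\<lambda>y. u y t * ut y t)"
  have "((\<lambda>s. ball_int (\<lambda>y. (u y s)\<^sup>2)) has_real_derivative E') (at t)"
    unfolding E'_def using I u_t cont(1,4) by (rule has_real_derivative_ball_int_square)
  then have "((\<lambda>s. - 4 * pi * \<sigma> * (R s)\<^sup>2 - 4 * pi * Rg * Tinf * Rs\<^sup>2 * R s * z s
              - 2 * pi * Rg * Tinf * Rs ^ 3 / (3 * \<rho>s) * (z s)\<^sup>2
              + cv * \<gamma> * Tinf * Rs ^ 3 / (2 * \<rho>s) * ball_int (\<lambda>y. (u y s)\<^sup>2)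
              + 2 * pi * \<rho>l * Rs ^ 3 * (Rd s)\<^sup>2)
      has_real_derivative
        - 4 * pi * \<sigma> * (2 * R t * Rd t) - 4 * pi * Rg * Tinf * Rs\<^sup>2 * (Rd t * z t + R t * zd t)
        - 2 * pi * Rg * Tinf * Rs ^ 3 / (3 * \<rho>s) * (2 * z t * zd t)
        + cv * \<gamma> * Tinf * Rs ^ 3 / (2 * \<rho>s) * E'
        + 2 * pi * \<rho>l * Rs ^ 3 * (2 * Rd t * Rdd t)) (at t)"
    using par(12) by (auto intro!: derivative_eq_intros R_t Rd_t z_t t simp: algebra_simps)
  then show ?thesis
    using par mass[OF t] zeq[OF t]
    unfolding E'_def heat by (simp only: linearized_bubble_energy_rate_identity)
qed

end
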